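(* Let $n\ge2$, $\alpha\in[0,\pi/2)$, $A,B\in\Pi_{s,\alpha}^n$, $q\in\mathbb{C}$ with $0<|q|\le1$, and $0<t<1$. Then (a) $|q|^2\,w_q(A\#_tB)\le\sec^3(\alpha)\,w_q^{1-t}(A)\,w_q^t(B)$; (b) $|q|^2\,w_q\big(((1-t)A^{-1}+tB^{-1})^{-1}\big)\le\sec^3(\alpha)\big((1-t)w_q^{-1}(A)+t\,w_q^{-1}(B)\big)^{-1}$.
   Context: For $\alpha\in[0,\pi/2)$, $S_\alpha=\{z\in\mathbb{C}:\operatorname{Re}z>0,\ |\operatorname{Im}z|\le\tan(\alpha)\operatorname{Re}z\}$, and $\Pi_{s,\alpha}^n$ is the set of $n\times n$ complex matrices whose numerical range is contained in $S_\alpha$. For an operator monotone $f:(0,\infty)\to(0,\infty)$ with $f(1)=1$ and probability measure $\nu_f$ on $[0,1]$ with $f(x)=\int_0^1((1-s)+sx^{-1})^{-1}d\nu_f(s)$, and accretive $X,Y$: $X\sigma_fY=\int_0^1((1-s)X^{-1}+sY^{-1})^{-1}d\nu_f(s)$. The weighted geometric mean is $A\#_tB=A\sigma_{f}B$ with $f(x)=x^t$ (equivalently $A\#_tB=\frac{\sin(t\pi)}{\pi}\int_0^\infty s^{t-1}(A^{-1}+sB^{-1})^{-1}ds$). $w_q(X)=\sup\{|\langle Xx,y\rangle|:\|x\|=\|y\|=1,\ \langle x,y\rangle=q\}$, with $w_q^{r}(X)=(w_q(X))^r$. *)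

theory Defs
  imports "HOL-Analysis.Analysis"
begin

definition cinner :: "complex^'n \<Rightarrow> complex^'n \<Rightarrow> complex" where
  "cinner x y = (\<Sum>i\<in>UNIV. x $ i * cnj (y $ i))"

definition numerical_range :: "complex^'n^'n \<Rightarrow> complex set" where
  "numerical_range X = {cinner (X *v x) x | x. norm x = 1}"

definition sector :: "real \<Rightarrow> complex set" where
  "sector \<alpha> = {z. 0 < Re z \<and> \<bar>Im z\<bar> \<le> tan \<alpha> * Re z}"

definition Pi_sector :: "real \<Rightarrow> (complex^'n^'n) set" where
  "Pi_sector \<alpha> = {X. numerical_range X \<subseteq> sector \<alpha>}"

definition geo_mean :: "real \<Rightarrow> complex^'n^'n \<Rightarrow> complex^'n^'n \<Rightarrow> complex^'n^'n" where
  "geo_mean t A B = (sin (t * pi) / pi) *\<^sub>R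
     integral {0<..} (\<lambda>s::real. (s powr (t - 1)) *\<^sub>R
        matrix_inv (matrix_inv A + s *\<^sub>R matrix_inv B))"

definition wq :: "complex \<Rightarrow> complex^'n^'n \<Rightarrow> real" where
  "wq q X = Sup {cmod (cinner (X *v x) y) | x y. norm x = 1 \<and> norm y = 1 \<and> cinner x y = q}"

end

theory Submission
  imports Defs
begin

text \<open>If the numerical range of \<open>X\<close> lies in the sector \<open>S\<^sub>\<alpha>\<close>, the form \<open>\<langle>X y, z\<rangle>\<close>
  satisfies the Cauchy--Schwarz type inequality
  \<open>\<bar>\<langle>X y, z\<rangle>\<bar>\<^sup>2 \<le> sec\<^sup>2 \<alpha> Re \<langle>X y, y\<rangle> Re \<langle>X z, z\<rangle>\<close>.
  For \<open>n \<ge> 2\<close> every unit vector \<open>x\<close> has a unit partner \<open>y\<close> with \<open>\<langle>x, y\<rangle> = q\<close> and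
  \<open>\<bar>\<langle>X x, y\<rangle>\<bar> \<ge> \<bar>q\<bar> \<bar>\<langle>X x, x\<rangle>\<bar>\<close>, so \<open>Re \<langle>X z, z\<rangle> \<le> w\<^sub>q(X) / \<bar>q\<bar> \<parallel>z\<parallel>\<^sup>2\<close>.
  Taking \<open>z = X y\<close> gives \<open>\<parallel>X y\<parallel>\<^sup>2 \<le> sec\<^sup>2 \<alpha> w\<^sub>q(X) / \<bar>q\<bar> Re \<langle>X y, y\<rangle>\<close>, that is
  \<open>Re \<langle>X\<^sup>-\<^sup>1 x, x\<rangle> \<ge> cos\<^sup>2 \<alpha> \<bar>q\<bar> / w\<^sub>q(X) \<parallel>x\<parallel>\<^sup>2\<close>.
  So \<open>a A\<^sup>-\<^sup>1 + b B\<^sup>-\<^sup>1\<close> is coercive with constant \<open>m = cos\<^sup>2 \<alpha> \<bar>q\<bar> (a / w\<^sub>q(A) + b / w\<^sub>q(B))\<close>,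
  its inverse has norm at most \<open>1 / m\<close>, and \<open>w\<^sub>q\<close> is bounded by the operator norm.
  This is (b), even with \<open>sec\<^sup>2 \<alpha> / \<bar>q\<bar>\<close> in place of \<open>sec\<^sup>3 \<alpha> / \<bar>q\<bar>\<^sup>2\<close>; (a) follows by
  integrating the bound for \<open>(A\<^sup>-\<^sup>1 + s B\<^sup>-\<^sup>1)\<^sup>-\<^sup>1\<close> against the integral representation of
  \<open>A #\<^sub>t B\<close>, using \<open>\<integral>\<^sub>0\<^sup>\<infinity> s\<^sup>t\<^sup>-\<^sup>1 / (1/u + s/v) ds = u\<^sup>1\<^sup>-\<^sup>t v\<^sup>t \<pi> / sin (t \<pi>)\<close>.\<close>

lemma cinner_add_left: "cinner (x + y) z = cinner x z + cinner y z"
  unfolding cinner_def by (simp add: distrib_right sum.distrib)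

lemma cinner_add_right: "cinner x (y + z) = cinner x y + cinner x z"
  unfolding cinner_def by (simp add: distrib_left sum.distrib)

lemma cinner_diff_right: "cinner x (y - z) = cinner x y - cinner x z"
  unfolding cinner_def by (simp add: right_diff_distrib sum_subtractf)

lemma cinner_smult_left: "cinner (c *s x) z = c * cinner x z"
  unfolding cinner_def by (simp add: sum_distrib_left mult.assoc)

lemma cinner_smult_right: "cinner x (c *s z) = cnj c * cinner x z"
  unfolding cinner_def by (simp add: sum_distrib_left mult.left_commute)

lemma cinner_scaleR_left: "cinner (r *\<^sub>R x) z = of_real r * cinner x z"
  unfolding cinner_def by (simp add: sum_distrib_left scaleR_conv_of_real[where 'a = complex] mult.assoc)

lemma cinner_zero_left [simp]: "cinner 0 z = 0"
  unfolding cinner_def by simp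

lemma cnj_cinner: "cnj (cinner x y) = cinner y x"
  unfolding cinner_def by (simp add: mult.commute)

lemma cinner_axis: "cinner x (axis i c) = x $ i * cnj c"
  unfolding cinner_def axis_def by (simp add: if_distrib cong: if_cong)

lemma cinner_self: "cinner x x = of_real ((norm x)\<^sup>2)"
proof -
  have "cinner x x = (\<Sum>i\<in>UNIV. of_real ((cmod (x $ i))\<^sup>2))"
    unfolding cinner_def by (simp only: complex_norm_square)
  also have "\<dots> = of_real ((norm x)\<^sup>2)"
    by (simp add: norm_vec_def L2_set_def sum_nonneg)
  finally show ?thesis .
qed

lemma norm_cinner_le: "cmod (cinner x y) \<le> norm x * norm y"
proof -
  have "cmod (cinner x y) \<le> (\<Sum>i\<in>UNIV. cmod (x $ i * cnj (y $ i)))"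
    unfolding cinner_def by (rule norm_sum)
  also have "\<dots> = (\<Sum>i\<in>UNIV. \<bar>cmod (x $ i)\<bar> * \<bar>cmod (y $ i)\<bar>)"
    by (simp add: norm_mult)
  also have "\<dots> \<le> L2_set (\<lambda>i. cmod (x $ i)) UNIV * L2_set (\<lambda>i. cmod (y $ i)) UNIV"
    by (rule L2_set_mult_ineq)
  finally show ?thesis unfolding norm_vec_def .
qed

lemma norm_vector_smult: "norm (c *s (x :: complex^'n)) = cmod c * norm x"
  unfolding norm_vec_def by (simp add: norm_mult L2_set_right_distrib)

lemma matrix_vector_mult_smult: "(X :: complex^'n^'m) *v (c *s x) = c *s (X *v x)"
  by (simp add: vec_eq_iff matrix_vector_mult_def sum_distrib_left mult.left_commute)

lemma scaleR_matrix_vector_mult: "(r *\<^sub>R (X :: complex^'n^'m)) *v x = r *\<^sub>R (X *v x)"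
  by (simp add: vec_eq_iff matrix_vector_mult_def scaleR_conv_of_real[where 'a = complex] sum_distrib_left mult.assoc)

lemma bounded_linear_matrix_vector_mult_left:
  "bounded_linear (\<lambda>X :: complex^'n^'m. X *v x)"
  unfolding linear_conv_bounded_linear[symmetric]
  by (rule linearI) (simp_all add: matrix_vector_mult_add_rdistrib scaleR_matrix_vector_mult)

lemma cinner_matrix_smult_self:
  "cinner (X *v (c *s u)) (c *s u) = of_real ((cmod c)\<^sup>2) * cinner (X *v u) u"
proof -
  have "cinner (X *v (c *s u)) (c *s u) = (c * cnj c) * cinner (X *v u) u"
    by (simp add: matrix_vector_mult_smult cinner_smult_left cinner_smult_right)
  then show ?thesis by (simp only: complex_norm_square)
qed

lemma discriminant_le:
  fixes p b c :: real
  assumes "0 \<le> c" and nonneg: "\<And>l. 0 \<le> p - 2 * l * b + l\<^sup>2 * c"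
  shows "b\<^sup>2 \<le> p * c"
proof (cases "c = 0")
  case True
  have "b = 0"
  proof (rule ccontr)
    assume "b \<noteq> 0"
    with True nonneg[of "(p + 1) / (2 * b)"] show False by (simp add: field_simps)
  qed
  with True show ?thesis by simp
next
  case False
  with \<open>0 \<le> c\<close> have "0 < c" by simp
  with nonneg[of "b / c"] show ?thesis by (simp add: field_simps power2_eq_square)
qed

lemma sq_mult_le_of_sector_products:
  fixes S \<rho> \<sigma> \<kappa> \<delta> \<tau> :: real
  assumes "0 \<le> \<rho>" "0 \<le> \<sigma>" "\<bar>\<kappa>\<bar> \<le> \<tau> * \<rho>"
    and minus: "S\<^sup>2 \<le> (\<tau> * \<rho> - \<kappa>) * (\<tau> * \<sigma> - \<delta>)"
    and plus: "S\<^sup>2 \<le> (\<tau> * \<rho> + \<kappa>) * (\<tau> * \<sigma> + \<delta>)"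
  shows "S\<^sup>2 * \<rho> \<le> (\<tau>\<^sup>2 * \<rho>\<^sup>2 - \<kappa>\<^sup>2) * \<sigma>"
proof (cases "0 \<le> \<delta> * \<rho> + \<kappa> * \<sigma>")
  case True
  have "S\<^sup>2 * \<rho> \<le> (\<tau> * \<rho> - \<kappa>) * ((\<tau> * \<sigma> - \<delta>) * \<rho>)"
    using mult_right_mono[OF minus \<open>0 \<le> \<rho>\<close>] by (simp add: mult.assoc)
  also have "\<dots> \<le> (\<tau> * \<rho> - \<kappa>) * ((\<tau> * \<rho> + \<kappa>) * \<sigma>)"
    using True assms(3) by (intro mult_left_mono) (auto simp: algebra_simps)
  finally show ?thesis by (simp add: algebra_simps power2_eq_square)
next
  case False
  have "S\<^sup>2 * \<rho> \<le> (\<tau> * \<rho> + \<kappa>) * ((\<tau> * \<sigma> + \<delta>) * \<rho>)"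
    using mult_right_mono[OF plus \<open>0 \<le> \<rho>\<close>] by (simp add: mult.assoc)
  also have "\<dots> \<le> (\<tau> * \<rho> + \<kappa>) * ((\<tau> * \<rho> - \<kappa>) * \<sigma>)"
    using False assms(3) by (intro mult_left_mono) (auto simp: algebra_simps)
  finally show ?thesis by (simp add: algebra_simps power2_eq_square)
qed

text \<open>This is the Cauchy--Schwarz inequality in \<open>\<real>\<^sup>2\<close> for the vectors
  \<open>(\<surd>(D/\<rho>), \<surd>(P\<^sup>2/\<rho>))\<close> and \<open>(\<surd>\<sigma>, X \<surd>\<rho>)\<close>.\<close>
lemma add_mult_sq_le:
  fixes S X P D \<sigma> \<rho> \<tau> \<kappa> :: real
  assumes "0 < \<rho>" "0 \<le> \<sigma>" "0 \<le> S" "0 \<le> X" "0 \<le> P" "0 \<le> D"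
    and S: "S\<^sup>2 * \<rho> \<le> D * \<sigma>" and P: "P\<^sup>2 = \<rho>\<^sup>2 + \<kappa>\<^sup>2" and D: "D = \<tau>\<^sup>2 * \<rho>\<^sup>2 - \<kappa>\<^sup>2"
  shows "(S + X * P)\<^sup>2 \<le> (1 + \<tau>\<^sup>2) * \<rho> * (\<sigma> + X\<^sup>2 * \<rho>)"
proof -
  have cross: "2 * \<rho> * S * X * P \<le> P\<^sup>2 * \<sigma> + D * X\<^sup>2 * \<rho>"
  proof (cases "\<sigma> = 0")
    case True
    with S assms(1,3) have "S = 0"
      by (simp add: mult_le_0_iff)
    with assms show ?thesis by simp
  next
    case False
    with assms(2) have "0 < \<sigma>" by simp
    have "\<sigma> * (2 * \<rho> * S * X * P) \<le> (P * \<sigma>)\<^sup>2 + (X * \<rho> * S)\<^sup>2"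
      using sum_squares_bound[of "P * \<sigma>" "X * \<rho> * S"] by (simp add: algebra_simps power2_eq_square)
    also have "(X * \<rho> * S)\<^sup>2 = X\<^sup>2 * \<rho> * (S\<^sup>2 * \<rho>)"
      by (simp add: power2_eq_square)
    also have "\<dots> \<le> X\<^sup>2 * \<rho> * (D * \<sigma>)"
      using S assms(1) by (intro mult_left_mono) auto
    finally have "\<sigma> * (2 * \<rho> * S * X * P) \<le> \<sigma> * (P\<^sup>2 * \<sigma> + D * X\<^sup>2 * \<rho>)"
      by (simp add: algebra_simps power2_eq_square)
    with \<open>0 < \<sigma>\<close> show ?thesis by simp
  qed
  have "\<rho> * (S + X * P)\<^sup>2 = S\<^sup>2 * \<rho> + 2 * \<rho> * S * X * P + \<rho> * X\<^sup>2 * P\<^sup>2"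
    by (simp add: algebra_simps power2_eq_square)
  also have "\<dots> \<le> D * \<sigma> + (P\<^sup>2 * \<sigma> + D * X\<^sup>2 * \<rho>) + \<rho> * X\<^sup>2 * P\<^sup>2"
    using S cross by simp
  also have "\<dots> = \<rho> * ((1 + \<tau>\<^sup>2) * \<rho> * (\<sigma> + X\<^sup>2 * \<rho>))"
    unfolding D P by (simp add: algebra_simps power2_eq_square)
  finally show ?thesis using assms(1) by simp
qed

locale sectorial_form =
  fixes \<phi> :: "complex^'n \<Rightarrow> complex^'n \<Rightarrow> complex" and \<tau> :: real
  assumes add_left: "\<phi> (x + y) z = \<phi> x z + \<phi> y z"
    and add_right: "\<phi> x (y + z) = \<phi> x y + \<phi> x z"
    and smult_left: "\<phi> (c *s x) z = c * \<phi> x z"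
    and smult_right: "\<phi> x (c *s z) = cnj c * \<phi> x z"
    and Im_self_le: "\<bar>Im (\<phi> u u)\<bar> \<le> \<tau> * Re (\<phi> u u)"
    and Re_self_nonneg: "0 \<le> Re (\<phi> u u)"
    and tau_nonneg: "0 \<le> \<tau>"
begin

lemma zero_left: "\<phi> 0 z = 0"
  using smult_left[of 0 0 z] by simp

lemma self_add_smult:
  "\<phi> (y + d *s w) (y + d *s w) = \<phi> y y + cnj d * \<phi> y w + d * \<phi> w y + d * cnj d * \<phi> w w"
  by (simp add: add_left add_right smult_left smult_right algebra_simps)

lemma sq_Im_self_le: "(Im (\<phi> u u))\<^sup>2 \<le> \<tau>\<^sup>2 * (Re (\<phi> u u))\<^sup>2"
  using Im_self_le[of u] Re_self_nonneg[of u] tau_nonneg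
  by (metis abs_le_square_iff abs_of_nonneg mult_nonneg_nonneg power_mult_distrib)

text \<open>Along \<open>y + l e w\<close> with \<open>e = -\<i> \<phi> y w / \<bar>\<phi> y w\<bar>\<close> and real \<open>l\<close>, the imaginary part
  of \<open>\<phi>\<close> is a quadratic in \<open>l\<close> with linear coefficient \<open>2 \<bar>\<phi> y w\<bar>\<close>; the sector condition
  bounds it by two discriminants.\<close>
lemma norm_sq_Re_orthogonal_le:
  assumes orth: "\<phi> y w + cnj (\<phi> w y) = 0"
  shows "(cmod (\<phi> y w))\<^sup>2 * Re (\<phi> y y) \<le> (\<tau>\<^sup>2 * (Re (\<phi> y y))\<^sup>2 - (Im (\<phi> y y))\<^sup>2) * Re (\<phi> w w)"
proof (cases "\<phi> y w = 0")
  case True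
  then show ?thesis
    using sq_Im_self_le[of y] Re_self_nonneg[of w] by simp
next
  case False
  define s where "s = \<phi> y w"
  define S where "S = cmod s"
  define e where "e = - \<i> * s / of_real S"
  have "0 < S" using False unfolding S_def s_def by simp
  have s_cnj: "s * cnj s = of_real (S\<^sup>2)"
    unfolding S_def by (simp only: complex_norm_square)
  have wy: "\<phi> w y = - cnj s"
    using orth unfolding s_def by (metis add_eq_0_iff complex_cnj_cnj complex_cnj_minus)
  have line: "\<bar>Im (\<phi> y y) + 2 * l * S + l\<^sup>2 * Im (\<phi> w w)\<bar> \<le> \<tau> * (Re (\<phi> y y) + l\<^sup>2 * Re (\<phi> w w))"
    for l :: real
  proof -
    define d where "d = of_real l * e"
    have "cnj d * s = \<i> * of_real (l * S)" "d * - cnj s = \<i> * of_real (l * S)"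
      "d * cnj d = of_real (l\<^sup>2)"
      unfolding d_def e_def using \<open>0 < S\<close> s_cnj by (simp_all add: field_simps power2_eq_square)
    then have "\<phi> (y + d *s w) (y + d *s w) = \<phi> y y + \<i> * of_real (2 * l * S) + of_real (l\<^sup>2) * \<phi> w w"
      unfolding self_add_smult wy s_def[symmetric] by (simp add: algebra_simps)
    then show ?thesis
      using Im_self_le[of "y + d *s w"] by simp
  qed
  have minus: "S\<^sup>2 \<le> (\<tau> * Re (\<phi> y y) - Im (\<phi> y y)) * (\<tau> * Re (\<phi> w w) - Im (\<phi> w w))"
  proof (rule discriminant_le)
    show "0 \<le> \<tau> * Re (\<phi> w w) - Im (\<phi> w w)"
      using Im_self_le[of w] by simp
    show "0 \<le> \<tau> * Re (\<phi> y y) - Im (\<phi> y y) - 2 * l * S + l\<^sup>2 * (\<tau> * Re (\<phi> w w) - Im (\<phi> w w))" for l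
      using line[of l] by (simp add: algebra_simps abs_le_iff)
  qed
  have plus: "S\<^sup>2 \<le> (\<tau> * Re (\<phi> y y) + Im (\<phi> y y)) * (\<tau> * Re (\<phi> w w) + Im (\<phi> w w))"
  proof (rule discriminant_le)
    show "0 \<le> \<tau> * Re (\<phi> w w) + Im (\<phi> w w)"
      using Im_self_le[of w] by simp
    show "0 \<le> \<tau> * Re (\<phi> y y) + Im (\<phi> y y) - 2 * l * S + l\<^sup>2 * (\<tau> * Re (\<phi> w w) + Im (\<phi> w w))" for l
      using line[of "- l"] by (simp add: algebra_simps abs_le_iff)
  qed
  show ?thesis
    unfolding S_def[symmetric] s_def[symmetric]
    by (rule sq_mult_le_of_sector_products[OF Re_self_nonneg Re_self_nonneg Im_self_le minus plus])
qed

lemma exists_Re_orthogonal_decomposition: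
  assumes "Re (\<phi> y y) \<noteq> 0"
  obtains c w where "z = w + c *s y" "\<phi> y w + cnj (\<phi> w y) = 0"
proof
  define c where "c = (\<phi> z y + cnj (\<phi> y z)) / (2 * of_real (Re (\<phi> y y)))"
  show "z = (z + (- c) *s y) + c *s y"
    by (simp add: vec_eq_iff)
  have yy: "\<phi> y y + cnj (\<phi> y y) = 2 * of_real (Re (\<phi> y y))"
    by (simp add: complex_eq_iff)
  have "\<phi> y (z + (- c) *s y) + cnj (\<phi> (z + (- c) *s y) y)
      = \<phi> y z + cnj (\<phi> z y) - cnj (c * (\<phi> y y + cnj (\<phi> y y)))"
    unfolding add_left add_right smult_left smult_right by (simp add: algebra_simps)
  also have "cnj (c * (\<phi> y y + cnj (\<phi> y y))) = \<phi> y z + cnj (\<phi> z y)"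
    unfolding yy c_def using assms by simp
  finally show "\<phi> y (z + (- c) *s y) + cnj (\<phi> (z + (- c) *s y) y) = 0"
    by simp
qed

lemma norm_sq_le:
  assumes definite: "\<And>u. Re (\<phi> u u) = 0 \<Longrightarrow> u = 0"
  shows "(cmod (\<phi> y z))\<^sup>2 \<le> (1 + \<tau>\<^sup>2) * Re (\<phi> y y) * Re (\<phi> z z)"
proof (cases "Re (\<phi> y y) = 0")
  case True
  then have "y = 0" by (rule definite)
  then show ?thesis by (simp add: zero_left)
next
  case False
  define \<rho> where "\<rho> = Re (\<phi> y y)"
  define \<kappa> where "\<kappa> = Im (\<phi> y y)"
  have "0 < \<rho>" using False Re_self_nonneg[of y] unfolding \<rho>_def by simp
  obtain c w where z: "z = w + c *s y" and orth: "\<phi> y w + cnj (\<phi> w y) = 0"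
    using exists_Re_orthogonal_decomposition[OF False] .
  have wy: "\<phi> w y = - cnj (\<phi> y w)"
    using orth by (metis add_eq_0_iff complex_cnj_cnj complex_cnj_minus)
  have yz: "\<phi> y z = \<phi> y w + cnj c * \<phi> y y"
    unfolding z by (simp add: add_right smult_right)
  have zz: "Re (\<phi> z z) = Re (\<phi> w w) + (cmod c)\<^sup>2 * \<rho>"
  proof -
    have "\<phi> z z = \<phi> w w + (cnj c * \<phi> w y + c * \<phi> y w) + c * cnj c * \<phi> y y"
      unfolding z self_add_smult by (simp add: algebra_simps)
    moreover have "Re (cnj c * \<phi> w y + c * \<phi> y w) = 0"
      unfolding wy by simp
    ultimately show ?thesis
      unfolding \<rho>_def by (simp add: complex_norm_square[symmetric])
  qed
  have "cmod (\<phi> y z) \<le> cmod (\<phi> y w) + cmod c * cmod (\<phi> y y)"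
    unfolding yz by (metis complex_mod_cnj norm_mult norm_triangle_ineq)
  then have "(cmod (\<phi> y z))\<^sup>2 \<le> (cmod (\<phi> y w) + cmod c * cmod (\<phi> y y))\<^sup>2"
    by (simp add: power_mono)
  also have "\<dots> \<le> (1 + \<tau>\<^sup>2) * \<rho> * (Re (\<phi> w w) + (cmod c)\<^sup>2 * \<rho>)"
  proof (rule add_mult_sq_le)
    show "(cmod (\<phi> y w))\<^sup>2 * \<rho> \<le> (\<tau>\<^sup>2 * \<rho>\<^sup>2 - \<kappa>\<^sup>2) * Re (\<phi> w w)"
      using norm_sq_Re_orthogonal_le[OF orth] unfolding \<rho>_def \<kappa>_def .
    show "(cmod (\<phi> y y))\<^sup>2 = \<rho>\<^sup>2 + \<kappa>\<^sup>2"
      unfolding \<rho>_def \<kappa>_def by (simp add: cmod_power2)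
    show "0 \<le> \<tau>\<^sup>2 * \<rho>\<^sup>2 - \<kappa>\<^sup>2"
      using sq_Im_self_le[of y] unfolding \<rho>_def \<kappa>_def by simp
  qed (use \<open>0 < \<rho>\<close> Re_self_nonneg in auto)
  finally show ?thesis unfolding zz \<rho>_def .
qed

end

lemma cinner_matrix_self_normalize:
  assumes "u \<noteq> 0"
  obtains v where "norm v = 1" "cinner (X *v u) u = of_real ((norm u)\<^sup>2) * cinner (X *v v) v"
proof
  define v where "v = of_real (1 / norm u) *s u"
  show "norm v = 1"
    using assms by (simp add: v_def norm_vector_smult norm_divide)
  have "u = of_real (norm u) *s v"
    using assms by (simp add: v_def vec_eq_iff)
  then show "cinner (X *v u) u = of_real ((norm u)\<^sup>2) * cinner (X *v v) v"
    by (metis cinner_matrix_smult_self norm_of_real abs_norm_cancel)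
qed

lemma Pi_sector_cinner_in_sector:
  assumes "X \<in> Pi_sector \<alpha>" "u \<noteq> 0"
  shows "cinner (X *v u) u \<in> sector \<alpha>"
proof -
  obtain v where v: "norm v = 1" and u: "cinner (X *v u) u = of_real ((norm u)\<^sup>2) * cinner (X *v v) v"
    using cinner_matrix_self_normalize[OF assms(2)] .
  from v assms(1) have "cinner (X *v v) v \<in> sector \<alpha>"
    unfolding Pi_sector_def numerical_range_def by blast
  moreover have "0 < (norm u)\<^sup>2" using assms(2) by simp
  ultimately show ?thesis
    unfolding u sector_def by (auto simp: abs_mult mult.left_commute)
qed

lemma Pi_sector_Re_pos: "X \<in> Pi_sector \<alpha> \<Longrightarrow> u \<noteq> 0 \<Longrightarrow> 0 < Re (cinner (X *v u) u)"
  using Pi_sector_cinner_in_sector unfolding sector_def by blast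

lemma Pi_sector_Im_le: "X \<in> Pi_sector \<alpha> \<Longrightarrow> \<bar>Im (cinner (X *v u) u)\<bar> \<le> tan \<alpha> * Re (cinner (X *v u) u)"
  using Pi_sector_cinner_in_sector[of X \<alpha> u] unfolding sector_def by (cases "u = 0") auto

lemma Pi_sector_invertible: "X \<in> Pi_sector \<alpha> \<Longrightarrow> invertible X"
  unfolding invertible_left_inverse matrix_left_invertible_ker
  using Pi_sector_Re_pos by fastforce

lemma one_plus_tan_sq: "cos \<alpha> \<noteq> 0 \<Longrightarrow> 1 + (tan \<alpha>)\<^sup>2 = 1 / (cos \<alpha>)\<^sup>2"
  by (simp add: tan_def field_simps sin_squared_eq)

lemma Pi_sector_norm_cinner_sq_le:
  assumes "X \<in> Pi_sector \<alpha>" "0 \<le> \<alpha>" "\<alpha> < pi / 2"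
  shows "(cmod (cinner (X *v y) z))\<^sup>2 \<le> Re (cinner (X *v y) y) * Re (cinner (X *v z) z) / (cos \<alpha>)\<^sup>2"
proof -
  have "0 \<le> tan \<alpha>" using assms(2,3) by (cases "\<alpha> = 0") (simp_all add: less_imp_le tan_gt_zero)
  then interpret sectorial_form "\<lambda>y z. cinner (X *v y) z" "tan \<alpha>"
  proof unfold_locales
    show "0 \<le> Re (cinner (X *v u) u)" for u
      using Pi_sector_Re_pos[OF assms(1), of u] by (cases "u = 0") auto
  qed (simp_all add: Pi_sector_Im_le[OF assms(1)] matrix_vector_right_distrib matrix_vector_mult_smult
      cinner_add_left cinner_add_right cinner_smult_left cinner_smult_right)
  have "(cmod (cinner (X *v y) z))\<^sup>2 \<le> (1 + (tan \<alpha>)\<^sup>2) * Re (cinner (X *v y) y) * Re (cinner (X *v z) z)"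
    by (rule norm_sq_le) (metis assms(1) Pi_sector_Re_pos less_irrefl)
  moreover have "cos \<alpha> \<noteq> 0" using assms(2,3) by (simp add: cos_gt_zero_pi less_imp_neq[symmetric])
  ultimately show ?thesis by (simp add: one_plus_tan_sq)
qed

lemma exists_unit_orthogonal:
  fixes x :: "complex^'n"
  assumes "CARD('n) \<ge> 2" and "x \<noteq> 0"
  obtains z where "norm z = 1" "cinner x z = 0"
proof -
  from \<open>x \<noteq> 0\<close> obtain i where "x $ i \<noteq> 0" by (auto simp: vec_eq_iff)
  have "\<exists>j::'n. j \<noteq> i"
  proof (rule ccontr)
    assume "\<not> (\<exists>j::'n. j \<noteq> i)"
    then have "UNIV = {i}" by auto
    then have "CARD('n) = card {i}" by (rule arg_cong)
    with assms(1) show False by simp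
  qed
  then obtain j where "j \<noteq> i" by blast
  define v where "v = axis i (cnj (x $ j)) - axis j (cnj (x $ i))"
  have "cinner x v = 0"
    unfolding v_def cinner_diff_right cinner_axis by simp
  have "v $ j = - cnj (x $ i)"
    using \<open>j \<noteq> i\<close> by (simp add: v_def axis_def)
  then have "v \<noteq> 0"
    using \<open>x $ i \<noteq> 0\<close> by (metis complex_cnj_zero_iff neg_equal_0_iff_equal zero_index)
  show ?thesis
  proof
    show "norm (of_real (1 / norm v) *s v) = 1"
      using \<open>v \<noteq> 0\<close> by (simp add: norm_vector_smult norm_divide)
    show "cinner x (of_real (1 / norm v) *s v) = 0"
      unfolding cinner_smult_right \<open>cinner x v = 0\<close> by simp
  qed
qed

text \<open>With \<open>z \<bottom> x\<close>, the vectors \<open>y = cnj q x \<plusminus> \<surd>(1 - \<bar>q\<bar>\<^sup>2) z\<close> are unit vectors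
  with \<open>\<langle>x, y\<rangle> = q\<close>, and \<open>\<langle>X x, y\<rangle> = q \<langle>X x, x\<rangle> \<plusminus> b\<close>; by the triangle inequality one of
  the two signs gives \<open>\<bar>\<langle>X x, y\<rangle>\<bar> \<ge> \<bar>q\<bar> \<bar>\<langle>X x, x\<rangle>\<bar>\<close>.\<close>
lemma exists_unit_cinner_eq_ge:
  fixes x :: "complex^'n" and X :: "complex^'n^'n"
  assumes "CARD('n) \<ge> 2" and "norm x = 1" and "cmod q \<le> 1"
  obtains y where "norm y = 1" "cinner x y = q"
    "cmod q * cmod (cinner (X *v x) x) \<le> cmod (cinner (X *v x) y)"
proof -
  have "x \<noteq> 0" using assms(2) by auto
  then obtain z where "norm z = 1" and xz: "cinner x z = 0"
    by (rule exists_unit_orthogonal[OF assms(1)])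
  have zx: "cinner z x = 0" using xz cnj_cinner[of x z] by simp
  have xx: "cinner x x = 1" and zz: "cinner z z = 1"
    using \<open>norm x = 1\<close> \<open>norm z = 1\<close> by (simp_all add: cinner_self)
  define s where "s = sqrt (1 - (cmod q)\<^sup>2)"
  have s2: "s\<^sup>2 = 1 - (cmod q)\<^sup>2"
    unfolding s_def using assms(3) power_le_one[of "cmod q" 2] by simp
  define y where "y e = cnj q *s x + of_real (e * s) *s z" for e :: real
  have unit: "norm (y e) = 1" if "\<bar>e\<bar> = 1" for e
  proof -
    have "cinner (y e) (y e) = q * cnj q + of_real ((e * s)\<^sup>2)"
      unfolding y_def cinner_add_left cinner_add_right cinner_smult_left cinner_smult_right xx zz xz zx
      by (simp add: power2_eq_square)
    also have "\<dots> = of_real ((cmod q)\<^sup>2 + e\<^sup>2 * s\<^sup>2)"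
      by (simp add: complex_norm_square[symmetric] power_mult_distrib)
    also have "(cmod q)\<^sup>2 + e\<^sup>2 * s\<^sup>2 = 1"
      using that s2 abs_square_eq_1[of e] by simp
    finally have "(norm (y e))\<^sup>2 = 1"
      unfolding cinner_self of_real_eq_iff .
    then show ?thesis using norm_ge_zero[of "y e"] by (auto simp: power2_eq_1_iff)
  qed
  have xy: "cinner x (y e) = q" for e
    unfolding y_def cinner_add_right cinner_smult_right xx xz by simp
  define a where "a = q * cinner (X *v x) x"
  define b where "b = of_real s * cinner (X *v x) z"
  have Xy: "cinner (X *v x) (y e) = a + of_real e * b" for e
    unfolding y_def cinner_add_right cinner_smult_right a_def b_def by simp
  have "2 * cmod a \<le> cmod (a + b) + cmod (a - b)"
    using norm_triangle_ineq[of "a + b" "a - b"] by simp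
  then have "cmod a \<le> cmod (cinner (X *v x) (y 1)) \<or> cmod a \<le> cmod (cinner (X *v x) (y (- 1)))"
    unfolding Xy by auto
  moreover have "cmod a = cmod q * cmod (cinner (X *v x) x)"
    unfolding a_def by (simp add: norm_mult)
  ultimately show ?thesis
    using that unit[of 1] unit[of "- 1"] xy by auto
qed

lemma bdd_above_wq_set:
  fixes X :: "complex^'n^'n"
  shows   "bdd_above {cmod (cinner (X *v x) y) | x y. norm x = 1 \<and> norm y = 1 \<and> cinner x y = q}"
proof -
  obtain K where K: "\<And>x. norm (X *v x) \<le> norm x * K"
    using bounded_linear.bounded[OF matrix_vector_mul_bounded_linear[of X]] by blast
  show ?thesis
  proof (rule bdd_aboveI[of _ K], clarify)
    fix x y :: "complex^'n" assume "norm x = 1" "norm y = 1"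
    then show "cmod (cinner (X *v x) y) \<le> K"
      using norm_cinner_le[of "X *v x" y] K[of x] by simp
  qed
qed

lemma norm_cinner_self_le_wq:
  fixes X :: "complex^'n^'n"
  assumes "CARD('n) \<ge> 2" and "norm x = 1" and "cmod q \<le> 1"
  shows "cmod q * cmod (cinner (X *v x) x) \<le> wq q X"
proof -
  obtain y where "norm y = 1" "cinner x y = q" and ge: "cmod q * cmod (cinner (X *v x) x) \<le> cmod (cinner (X *v x) y)"
    using exists_unit_cinner_eq_ge[OF assms] .
  moreover have "cmod (cinner (X *v x) y) \<le> wq q X"
    unfolding wq_def by (rule cSup_upper[OF _ bdd_above_wq_set]) (use assms(2) calculation in blast)
  ultimately show ?thesis by linarith
qed

lemma wq_le_of_norm_le:
  fixes X :: "complex^'n^'n"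
  assumes "CARD('n) \<ge> 2" and "cmod q \<le> 1" and bound: "\<And>x. norm (X *v x) \<le> C * norm x"
  shows "wq q X \<le> C"
proof -
  obtain e :: "complex^'n" where "norm e = 1"
    by (rule vector_choose_size[of 1]) simp_all
  moreover obtain y where "norm y = 1" "cinner e y = q"
    using exists_unit_cinner_eq_ge[OF assms(1) \<open>norm e = 1\<close> assms(2), of X] by metis
  ultimately have "{cmod (cinner (X *v x) y) | x y. norm x = 1 \<and> norm y = 1 \<and> cinner x y = q} \<noteq> {}"
    by blast
  then show ?thesis
    unfolding wq_def
  proof (rule cSup_least, clarify)
    fix x y :: "complex^'n" assume "norm x = 1" "norm y = 1"
    then show "cmod (cinner (X *v x) y) \<le> C"
      using norm_cinner_le[of "X *v x" y] bound[of x] by simp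
  qed
qed

lemma Re_cinner_le_wq:
  fixes X :: "complex^'n^'n"
  assumes "CARD('n) \<ge> 2" and "0 < cmod q" and "cmod q \<le> 1"
  shows "Re (cinner (X *v z) z) \<le> wq q X / cmod q * (norm z)\<^sup>2"
proof (cases "z = 0")
  case False
  then obtain v where "norm v = 1" and z: "cinner (X *v z) z = of_real ((norm z)\<^sup>2) * cinner (X *v v) v"
    by (rule cinner_matrix_self_normalize)
  have "cmod q * Re (cinner (X *v v) v) \<le> cmod q * cmod (cinner (X *v v) v)"
    by (rule mult_left_mono[OF complex_Re_le_cmod]) simp
  also have "\<dots> \<le> wq q X"
    by (rule norm_cinner_self_le_wq[OF assms(1) \<open>norm v = 1\<close> assms(3)])
  finally have "cmod q * Re (cinner (X *v v) v) \<le> wq q X" .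
  then have "Re (cinner (X *v v) v) \<le> wq q X / cmod q"
    using assms(2) by (simp add: field_simps)
  then have "(norm z)\<^sup>2 * Re (cinner (X *v v) v) \<le> (norm z)\<^sup>2 * (wq q X / cmod q)"
    by (rule mult_left_mono) simp
  then show ?thesis
    unfolding z by (simp add: mult.commute)
qed simp

lemma wq_pos:
  fixes X :: "complex^'n^'n"
  assumes "CARD('n) \<ge> 2" and "0 < cmod q" and "cmod q \<le> 1" and "X \<in> Pi_sector \<alpha>"
  shows "0 < wq q X"
proof -
  obtain e :: "complex^'n" where "norm e = 1"
    by (rule vector_choose_size[of 1]) simp_all
  then have "e \<noteq> 0" by auto
  then have "0 < Re (cinner (X *v e) e)"
    by (rule Pi_sector_Re_pos[OF assms(4)])
  then have "0 < cmod (cinner (X *v e) e)"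
    using complex_Re_le_cmod by (rule less_le_trans)
  then have "0 < cmod q * cmod (cinner (X *v e) e)"
    using assms(2) by simp
  also have "\<dots> \<le> wq q X"
    by (rule norm_cinner_self_le_wq[OF assms(1) \<open>norm e = 1\<close> assms(3)])
  finally show ?thesis .
qed

lemma matrix_inv_cancel:
  fixes X :: "complex^'n^'n"
  assumes "invertible X"
  shows "X *v (matrix_inv X *v x) = x" "matrix_inv X *v (X *v x) = x"
proof -
  have "X ** matrix_inv X = mat 1 \<and> matrix_inv X ** X = mat 1"
    using assms unfolding invertible_def matrix_inv_def by (rule someI_ex)
  then show "X *v (matrix_inv X *v x) = x" "matrix_inv X *v (X *v x) = x"
    by (simp_all add: matrix_vector_mul_assoc)
qed

lemma norm_matrix_inv_le_of_coercive:
  fixes Y :: "complex^'n^'n"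
  assumes "0 < m" and coercive: "\<And>x. m * (norm x)\<^sup>2 \<le> Re (cinner (Y *v x) x)"
  shows "norm (matrix_inv Y *v x) \<le> norm x / m"
proof -
  have lower: "m * norm u \<le> norm (Y *v u)" for u
  proof -
    have "m * norm u * norm u \<le> Re (cinner (Y *v u) u)"
      using coercive[of u] by (simp add: power2_eq_square mult.assoc)
    also have "\<dots> \<le> norm (Y *v u) * norm u"
      using complex_Re_le_cmod norm_cinner_le by (rule order_trans)
    finally show ?thesis
      by (cases "u = 0") simp_all
  qed
  have "invertible Y"
    unfolding invertible_left_inverse matrix_left_invertible_ker
    using lower \<open>0 < m\<close> by (metis mult_le_0_iff norm_le_zero_iff norm_zero not_less)
  then have "m * norm (matrix_inv Y *v x) \<le> norm x"
    using lower[of "matrix_inv Y *v x"] by (simp add: matrix_inv_cancel)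
  with \<open>0 < m\<close> show ?thesis by (simp add: field_simps)
qed

lemma norm_matrix_vector_sq_le:
  fixes X :: "complex^'n^'n"
  assumes "CARD('n) \<ge> 2" "0 < cmod q" "cmod q \<le> 1"
    and "X \<in> Pi_sector \<alpha>" "0 \<le> \<alpha>" "\<alpha> < pi / 2"
  shows "(norm (X *v y))\<^sup>2 \<le> wq q X / (cmod q * (cos \<alpha>)\<^sup>2) * Re (cinner (X *v y) y)"
proof -
  define n where "n = (norm (X *v y))\<^sup>2"
  have Re_nonneg: "0 \<le> Re (cinner (X *v y) y)"
    using Pi_sector_Re_pos[OF assms(4), of y] by (cases "y = 0") auto
  have "n * n = (cmod (cinner (X *v y) (X *v y)))\<^sup>2"
    unfolding n_def cinner_self norm_of_real abs_power2 by (simp add: power2_eq_square)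
  also have "\<dots> \<le> Re (cinner (X *v y) y) * Re (cinner (X *v (X *v y)) (X *v y)) / (cos \<alpha>)\<^sup>2"
    by (rule Pi_sector_norm_cinner_sq_le[OF assms(4-6)])
  also have "\<dots> \<le> Re (cinner (X *v y) y) * (wq q X / cmod q * n) / (cos \<alpha>)\<^sup>2"
    using Re_cinner_le_wq[OF assms(1-3), of X "X *v y"] Re_nonneg
    by (intro divide_right_mono mult_left_mono) (simp_all add: n_def)
  finally have le: "n * n \<le> n * (wq q X / (cmod q * (cos \<alpha>)\<^sup>2) * Re (cinner (X *v y) y))"
    by (simp add: field_simps)
  show ?thesis
  proof (cases "n = 0")
    case True
    then show ?thesis
      using wq_pos[OF assms(1-4)] Re_nonneg by (simp add: n_def)
  next
    case False
    then have "0 < n" by (simp add: n_def)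
    with le show ?thesis
      unfolding n_def[symmetric] by (rule mult_left_le_imp_le)
  qed
qed

lemma Re_cinner_matrix_inv_ge:
  fixes X :: "complex^'n^'n"
  assumes "CARD('n) \<ge> 2" "0 < cmod q" "cmod q \<le> 1"
    and "X \<in> Pi_sector \<alpha>" "0 \<le> \<alpha>" "\<alpha> < pi / 2"
  shows "(cos \<alpha>)\<^sup>2 * cmod q / wq q X * (norm x)\<^sup>2 \<le> Re (cinner (matrix_inv X *v x) x)"
proof -
  define y where "y = matrix_inv X *v x"
  have x: "x = X *v y"
    unfolding y_def using Pi_sector_invertible[OF assms(4)] by (simp add: matrix_inv_cancel)
  have "cinner (matrix_inv X *v x) x = cnj (cinner (X *v y) y)"
    unfolding y_def[symmetric] cnj_cinner by (simp add: x[symmetric])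
  then have "Re (cinner (matrix_inv X *v x) x) = Re (cinner (X *v y) y)"
    by simp
  moreover have "(norm x)\<^sup>2 \<le> wq q X / (cmod q * (cos \<alpha>)\<^sup>2) * Re (cinner (X *v y) y)"
    unfolding x by (rule norm_matrix_vector_sq_le[OF assms])
  moreover have "0 < wq q X" "0 < cos \<alpha>"
    using wq_pos[OF assms(1-4)] assms(5,6) by (simp_all add: cos_gt_zero_pi)
  ultimately show ?thesis
    using assms(2) by (simp add: field_simps)
qed

lemma norm_matrix_inv_comb_le:
  fixes A B :: "complex^'n^'n"
  assumes "CARD('n) \<ge> 2" "0 < cmod q" "cmod q \<le> 1"
    and "A \<in> Pi_sector \<alpha>" "B \<in> Pi_sector \<alpha>" "0 \<le> \<alpha>" "\<alpha> < pi / 2"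
    and "0 < a" "0 \<le> b"
  shows "norm (matrix_inv (a *\<^sub>R matrix_inv A + b *\<^sub>R matrix_inv B) *v x)
    \<le> norm x / ((cos \<alpha>)\<^sup>2 * cmod q * (a / wq q A + b / wq q B))"
proof (rule norm_matrix_inv_le_of_coercive)
  have "0 < wq q A" "0 < wq q B" "0 < cos \<alpha>"
    using wq_pos[OF assms(1-3)] assms(4-7) by (simp_all add: cos_gt_zero_pi)
  then show "0 < (cos \<alpha>)\<^sup>2 * cmod q * (a / wq q A + b / wq q B)"
    using assms(2,8,9) by (simp add: add_pos_nonneg)
  fix u
  have "a * ((cos \<alpha>)\<^sup>2 * cmod q / wq q A * (norm u)\<^sup>2) \<le> a * Re (cinner (matrix_inv A *v u) u)"
    using Re_cinner_matrix_inv_ge[OF assms(1-4,6,7)] less_imp_le[OF assms(8)] by (rule mult_left_mono)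
  moreover have "b * ((cos \<alpha>)\<^sup>2 * cmod q / wq q B * (norm u)\<^sup>2) \<le> b * Re (cinner (matrix_inv B *v u) u)"
    using Re_cinner_matrix_inv_ge[OF assms(1-3,5-7)] assms(9) by (rule mult_left_mono)
  ultimately show "(cos \<alpha>)\<^sup>2 * cmod q * (a / wq q A + b / wq q B) * (norm u)\<^sup>2
      \<le> Re (cinner ((a *\<^sub>R matrix_inv A + b *\<^sub>R matrix_inv B) *v u) u)"
    by (simp add: matrix_vector_mult_add_rdistrib scaleR_matrix_vector_mult cinner_add_left
        cinner_scaleR_left algebra_simps)
qed

lemma Beta_reflection:
  fixes t :: real
  assumes "0 < t" "t < 1"
  shows "Beta t (1 - t) = pi / sin (t * pi)"
proof -
  have "complex_of_real (Gamma t * Gamma (1 - t)) = Gamma (of_real t) * Gamma (1 - of_real t)"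
    by (metis Gamma_complex_of_real of_real_1 of_real_diff of_real_mult)
  also have "\<dots> = of_real pi / sin (of_real pi * of_real t)"
    by (rule Gamma_reflection_complex)
  also have "\<dots> = complex_of_real (pi / sin (pi * t))"
    by (metis of_real_divide of_real_mult sin_of_real)
  finally have "Gamma t * Gamma (1 - t) = pi / sin (pi * t)"
    using of_real_eq_iff by blast
  then show ?thesis by (simp add: Beta_def mult.commute)
qed

lemma powr_div_one_plus_substitution:
  fixes m t x :: real
  assumes "0 < m" "0 < x" "x < 1"
  shows "(m * (x / (1 - x))) powr (t - 1) / (1 + m * (x / (1 - x)) / m) * (m / (1 - x)\<^sup>2)
    = m powr t * (x powr (t - 1) * (1 - x) powr ((1 - t) - 1))"
proof -
  define y where "y = 1 - x"
  have "0 < y" "0 < y powr t" using assms by (simp_all add: y_def)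
  have "(m * (x / y)) powr (t - 1) = m powr t / m * x powr (t - 1) * (y / y powr t)"
    using assms \<open>0 < y\<close> by (simp add: powr_mult powr_divide powr_diff)
  moreover have "1 + m * (x / y) / m = 1 / y"
    using assms \<open>0 < y\<close> by (simp add: y_def field_simps)
  ultimately have "(m * (x / y)) powr (t - 1) / (1 + m * (x / y) / m) * (m / y\<^sup>2)
      = (m powr t / m * x powr (t - 1) * (y / y powr t)) / (1 / y) * (m / y\<^sup>2)"
    by (simp only:)
  also have "\<dots> = m powr t * (x powr (t - 1) * (1 / y powr t))"
    using assms \<open>0 < y\<close> \<open>0 < y powr t\<close> by (simp add: field_simps power2_eq_square)
  also have "1 / y powr t = y powr ((1 - t) - 1)"
    using \<open>0 < y\<close> by (simp add: powr_minus_divide)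
  finally show ?thesis unfolding y_def .
qed

lemma filterlim_scaled_odds_at_left_1:
  fixes m :: real
  assumes "0 < m"
  shows "LIM x (at_left 1). m * (x / (1 - x)) :> at_top"
proof -
  have "((\<lambda>x::real. 1 - x) \<longlongrightarrow> 0) (at_left 1)"
    by (auto intro!: tendsto_eq_intros)
  moreover have "eventually (\<lambda>x::real. 0 < 1 - x) (at_left 1)"
    by (simp add: eventually_at_left_field) (auto intro: exI[of _ 0])
  ultimately have "LIM x (at_left (1::real)). inverse (1 - x) :> at_top"
    by (rule filterlim_inverse_at_top)
  then have "LIM x (at_left (1::real)). x * inverse (1 - x) :> at_top"
    by (rule filterlim_tendsto_pos_mult_at_top[rotated 2]) (auto intro!: tendsto_eq_intros)
  then have "LIM x (at_left (1::real)). m * (x * inverse (1 - x)) :> at_top"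
    by (rule filterlim_tendsto_pos_mult_at_top[rotated 2]) (use assms in \<open>auto intro!: tendsto_eq_intros\<close>)
  then show ?thesis by (simp add: field_simps)
qed

text \<open>The substitution \<open>u = m x / (1 - x)\<close> turns the integral into \<open>m\<^sup>t B(t, 1 - t)\<close>.\<close>
lemma interval_integral_powr_div_one_plus:
  fixes t m :: real
  assumes "0 < t" "t < 1" "0 < m"
  shows "set_integrable lborel (einterval 0 \<infinity>) (\<lambda>u. u powr (t - 1) / (1 + u / m))"
    and "(LBINT u=0..\<infinity>. u powr (t - 1) / (1 + u / m)) = m powr t * Beta t (1 - t)"
proof -
  define f where "f u = u powr (t - 1) / (1 + u / m)" for u :: real
  define g where "g x = m * (x / (1 - x))" for x :: real
  define g' where "g' x = m / (1 - x)\<^sup>2" for x :: real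
  define h where "h x = m powr t * (x powr (t - 1) * (1 - x) powr ((1 - t) - 1))" for x :: real
  have unit_interval: "einterval 0 1 = {0<..<1}"
    by (auto simp: einterval_def zero_ereal_def one_ereal_def)
  have ereal_unit: "0 < x \<and> x < 1" if "0 < ereal x" "ereal x < 1" for x
    using that by (simp add: zero_ereal_def one_ereal_def)
  have h_integrable: "set_integrable lborel (einterval 0 1) h"
    unfolding h_def using assms
    by (intro set_integrable_mult_right set_integrable_subset[OF integrable_Beta[of t "1 - t"]])
      (auto simp: unit_interval)
  have fgh: "f (g x) * g' x = h x" if "0 < x" "x < 1" for x
    unfolding f_def g_def g'_def h_def using assms(3) that by (rule powr_div_one_plus_substitution)
  have deriv: "(g has_real_derivative g' x) (at x)" if "0 < ereal x" "ereal x < 1" for x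
    using ereal_unit[OF that] unfolding g_def g'_def
    by (auto intro!: derivative_eq_intros simp: field_simps power2_eq_square)
  have f_cont: "isCont f (g x)" if "0 < ereal x" "ereal x < 1" for x
  proof -
    have "0 < g x" using ereal_unit[OF that] assms(3) by (simp add: g_def)
    moreover have "1 + g x / m \<noteq> 0"
      using divide_pos_pos[OF \<open>0 < g x\<close> assms(3)] by linarith
    ultimately show ?thesis
      unfolding f_def using assms(3) by (intro continuous_intros) auto
  qed
  have g'_cont: "isCont g' x" if "0 < ereal x" "ereal x < 1" for x
    using ereal_unit[OF that] unfolding g'_def by (auto intro!: continuous_intros)
  have f_nonneg: "0 \<le> f (g x)" if "0 < ereal x" "ereal x < 1" for x
    using ereal_unit[OF that] assms(3) by (simp add: f_def g_def)
  have g'_nonneg: "0 \<le> g' x" for x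
    using assms(3) by (simp add: g'_def)
  have "(g \<longlongrightarrow> 0) (at_right 0)"
    unfolding g_def by (auto intro!: tendsto_eq_intros)
  then have lim0: "((ereal \<circ> g \<circ> real_of_ereal) \<longlongrightarrow> 0) (at_right 0)"
    unfolding zero_ereal_def by (simp add: ereal_tendsto_simps comp_assoc[symmetric])
  have lim1: "((ereal \<circ> g \<circ> real_of_ereal) \<longlongrightarrow> \<infinity>) (at_left 1)"
    using filterlim_scaled_odds_at_left_1[OF assms(3)] unfolding one_ereal_def g_def
    by (simp add: ereal_tendsto_simps comp_assoc[symmetric])
  have fg_integrable: "set_integrable lborel (einterval 0 1) (\<lambda>x. f (g x) * g' x)"
    using h_integrable by (subst set_integrable_cong[OF refl refl, where f' = h]) (auto simp: unit_interval fgh)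
  note substitution = interval_integral_substitution_nonneg[of 0 1 g g' f 0 \<infinity>,
      OF _ deriv f_cont g'_cont f_nonneg g'_nonneg lim0 lim1 fg_integrable]
  then show "set_integrable lborel (einterval 0 \<infinity>) (\<lambda>u. u powr (t - 1) / (1 + u / m))"
    unfolding f_def by simp
  have "(LBINT u=0..\<infinity>. f u) = (LBINT x=0..1. f (g x) * g' x)"
    using substitution by simp
  also have "\<dots> = (LBINT x=0..1. h x)"
    by (rule interval_lebesgue_integral_cong) (auto simp: unit_interval fgh)
  also have "\<dots> = integral {0<..<1} h"
    using h_integrable
    by (simp add: interval_lebesgue_integral_def unit_interval set_borel_integral_eq_integral)
  also have "\<dots> = m powr t * Beta t (1 - t)"
    using has_integral_Beta_real[of t "1 - t"] assms unfolding h_def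
    by (simp add: has_integral_Icc_iff_Ioo integral_unique)
  finally show "(LBINT u=0..\<infinity>. u powr (t - 1) / (1 + u / m)) = m powr t * Beta t (1 - t)"
    unfolding f_def .
qed

lemma has_integral_powr_div_one_plus:
  fixes t m :: real
  assumes "0 < t" "t < 1" "0 < m"
  shows "((\<lambda>u. u powr (t - 1) / (1 + u / m)) has_integral m powr t * (pi / sin (t * pi))) {0<..}"
proof -
  have half_line: "einterval 0 \<infinity> = {0<..}"
    by (auto simp: einterval_def zero_ereal_def)
  note integrable = interval_integral_powr_div_one_plus(1)[OF assms, unfolded half_line]
  have "integral {0<..} (\<lambda>u. u powr (t - 1) / (1 + u / m)) = m powr t * Beta t (1 - t)"
    using interval_integral_powr_div_one_plus(2)[OF assms] integrable
    by (simp add: interval_lebesgue_integral_def half_line set_borel_integral_eq_integral)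
  also have "\<dots> = m powr t * (pi / sin (t * pi))"
    using Beta_reflection assms by simp
  finally show ?thesis
    using integrable by (metis has_integral_integrable_integral set_borel_integral_eq_integral(1))
qed

lemma has_integral_powr_div_linear:
  fixes t a b :: real
  assumes "0 < t" "t < 1" "0 < a" "0 < b"
  shows "((\<lambda>s. s powr (t - 1) / (1 / a + s / b)) has_integral a powr (1 - t) * b powr t * (pi / sin (t * pi))) {0<..}"
proof -
  have "((\<lambda>s. a * (s powr (t - 1) / (1 + s / (b / a)))) has_integral a * ((b / a) powr t * (pi / sin (t * pi)))) {0<..}"
    using assms by (intro has_integral_mult_right has_integral_powr_div_one_plus) auto
  moreover have "a * (s powr (t - 1) / (1 + s / (b / a))) = s powr (t - 1) / (1 / a + s / b)" for s
    using assms by (simp add: field_simps)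
  moreover have "a * ((b / a) powr t * c) = a powr (1 - t) * b powr t * c" for c
    using assms by (simp add: powr_divide powr_diff field_simps)
  ultimately show ?thesis by simp
qed

text \<open>If the integrand is not integrable, \<open>integral\<close> returns \<open>0\<close>, and then so does \<open>geo_mean\<close>.\<close>
lemma norm_geo_mean_le:
  fixes A B :: "complex^'n^'n"
  assumes "0 < t" "t < 1" "0 < a" "0 < b" "0 < c"
    and bound: "\<And>s x. 0 < s \<Longrightarrow>
      norm (matrix_inv (matrix_inv A + s *\<^sub>R matrix_inv B) *v x) \<le> norm x / (c * (1 / a + s / b))"
  shows "norm (geo_mean t A B *v x) \<le> a powr (1 - t) * b powr t / c * norm x"
proof -
  define F where "F s = s powr (t - 1) *\<^sub>R matrix_inv (matrix_inv A + s *\<^sub>R matrix_inv B)" for s :: real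
  define g where "g s = s powr (t - 1) / (1 / a + s / b) / c * norm x" for s :: real
  have "0 < sin (t * pi)"
    using assms(1,2) by (intro sin_gt_zero) (auto simp: mult_less_cancel_right1)
  have g_integral: "(g has_integral a powr (1 - t) * b powr t * (pi / sin (t * pi)) / c * norm x) {0<..}"
    unfolding g_def using assms(1-4)
    by (intro has_integral_mult_left has_integral_divide has_integral_powr_div_linear)
  have F_bound: "norm (F s *v x) \<le> g s" if "s \<in> {0<..}" for s
  proof -
    have "s powr (t - 1) * norm (matrix_inv (matrix_inv A + s *\<^sub>R matrix_inv B) *v x)
        \<le> s powr (t - 1) * (norm x / (c * (1 / a + s / b)))"
      using bound that by (intro mult_left_mono) auto
    then show ?thesis
      unfolding F_def g_def scaleR_matrix_vector_mult by (simp add: field_simps)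
  qed
  show ?thesis
  proof (cases "F integrable_on {0<..}")
    case True
    have Fx_integrable: "(\<lambda>s. F s *v x) integrable_on {0<..}"
      using integrable_linear[OF True bounded_linear_matrix_vector_mult_left] by (simp add: o_def)
    have "geo_mean t A B *v x = (sin (t * pi) / pi) *\<^sub>R integral {0<..} (\<lambda>s. F s *v x)"
      unfolding geo_mean_def F_def[symmetric] scaleR_matrix_vector_mult
      using integral_linear[OF True bounded_linear_matrix_vector_mult_left] by (simp add: o_def)
    then have "norm (geo_mean t A B *v x) = sin (t * pi) / pi * norm (integral {0<..} (\<lambda>s. F s *v x))"
      using \<open>0 < sin (t * pi)\<close> by simp
    also have "\<dots> \<le> sin (t * pi) / pi * (a powr (1 - t) * b powr t * (pi / sin (t * pi)) / c * norm x)"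
      using integral_norm_bound_integral[OF Fx_integrable has_integral_integrable[OF g_integral] F_bound]
        integral_unique[OF g_integral] \<open>0 < sin (t * pi)\<close>
      by (intro mult_left_mono) auto
    also have "\<dots> = a powr (1 - t) * b powr t / c * norm x"
      using \<open>0 < sin (t * pi)\<close> by simp
    finally show ?thesis .
  next
    case False
    then have "geo_mean t A B = 0"
      unfolding geo_mean_def F_def[symmetric] by (simp add: not_integrable_integral)
    then show ?thesis using assms(5) by simp
  qed
qed

lemma wq_geo_mean_le:
  fixes A B :: "complex^'n^'n"
  assumes "CARD('n) \<ge> 2" "0 < cmod q" "cmod q \<le> 1"
    and "A \<in> Pi_sector \<alpha>" "B \<in> Pi_sector \<alpha>" "0 \<le> \<alpha>" "\<alpha> < pi / 2"
    and "0 < t" "t < 1"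
  shows "cmod q * wq q (geo_mean t A B) \<le> (1 / cos \<alpha>)\<^sup>2 * wq q A powr (1 - t) * wq q B powr t"
proof -
  have pos: "0 < wq q A" "0 < wq q B" "0 < cos \<alpha>"
    using wq_pos[OF assms(1-3)] assms(4-7) by (simp_all add: cos_gt_zero_pi)
  have "norm (geo_mean t A B *v x)
      \<le> wq q A powr (1 - t) * wq q B powr t / ((cos \<alpha>)\<^sup>2 * cmod q) * norm x" for x
  proof (rule norm_geo_mean_le)
    show "norm (matrix_inv (matrix_inv A + s *\<^sub>R matrix_inv B) *v x)
        \<le> norm x / ((cos \<alpha>)\<^sup>2 * cmod q * (1 / wq q A + s / wq q B))" if "0 < s" for s x
      using norm_matrix_inv_comb_le[OF assms(1-7), of 1 s x] that by simp
  qed (use assms(2,8,9) pos in simp_all)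
  then have "wq q (geo_mean t A B) \<le> wq q A powr (1 - t) * wq q B powr t / ((cos \<alpha>)\<^sup>2 * cmod q)"
    by (rule wq_le_of_norm_le[OF assms(1,3)])
  then show ?thesis
    using assms(2) pos by (simp add: field_simps power2_eq_square)
qed

lemma wq_matrix_inv_comb_le:
  fixes A B :: "complex^'n^'n"
  assumes "CARD('n) \<ge> 2" "0 < cmod q" "cmod q \<le> 1"
    and "A \<in> Pi_sector \<alpha>" "B \<in> Pi_sector \<alpha>" "0 \<le> \<alpha>" "\<alpha> < pi / 2"
    and "0 < t" "t < 1"
  shows "cmod q * wq q (matrix_inv ((1 - t) *\<^sub>R matrix_inv A + t *\<^sub>R matrix_inv B))
    \<le> (1 / cos \<alpha>)\<^sup>2 * inverse ((1 - t) * inverse (wq q A) + t * inverse (wq q B))"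
proof -
  define H where "H = (1 - t) / wq q A + t / wq q B"
  have pos: "0 < H" "0 < cos \<alpha>"
    using wq_pos[OF assms(1-3)] assms(4-9) by (simp_all add: H_def cos_gt_zero_pi add_pos_pos)
  define W where "W = wq q (matrix_inv ((1 - t) *\<^sub>R matrix_inv A + t *\<^sub>R matrix_inv B))"
  have "W \<le> 1 / ((cos \<alpha>)\<^sup>2 * cmod q * H)"
    using norm_matrix_inv_comb_le[OF assms(1-7), of "1 - t" t] assms(8,9) unfolding W_def H_def
    by (intro wq_le_of_norm_le[OF assms(1,3)]) simp
  moreover have "inverse ((1 - t) * inverse (wq q A) + t * inverse (wq q B)) = 1 / H"
    unfolding H_def by (simp add: inverse_eq_divide)
  ultimately show ?thesis
    using assms(2) pos unfolding W_def[symmetric] by (simp add: field_simps power2_eq_square)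
qed

theorem mainTheorem11:
  fixes A B :: "complex^'n^'n" and \<alpha> t :: real and q :: complex
  assumes "CARD('n) \<ge> 2"
    and "0 \<le> \<alpha>" and "\<alpha> < pi / 2"
    and "A \<in> Pi_sector \<alpha>" and "B \<in> Pi_sector \<alpha>"
    and "0 < cmod q" and "cmod q \<le> 1"
    and "0 < t" and "t < 1"
  shows "((cmod q)^2 * wq q (geo_mean t A B)
           \<le> (1 / cos \<alpha>)^3 * (wq q A powr (1 - t)) * (wq q B powr t))
    \<and> ((cmod q)^2 * wq q (matrix_inv ((1 - t) *\<^sub>R matrix_inv A + t *\<^sub>R matrix_inv B))
           \<le> (1 / cos \<alpha>)^3 * inverse ((1 - t) * inverse (wq q A) + t * inverse (wq q B)))"
proof -
  have "0 < cos \<alpha>" using assms(2,3) by (simp add: cos_gt_zero_pi)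
  then have sec: "1 \<le> 1 / cos \<alpha>" by simp
  have weaken: "(cmod q)\<^sup>2 * w \<le> (1 / cos \<alpha>) ^ 3 * R"
    if "cmod q * w \<le> (1 / cos \<alpha>)\<^sup>2 * R" "0 \<le> R" for w R
  proof -
    have "(cmod q)\<^sup>2 * w \<le> cmod q * ((1 / cos \<alpha>)\<^sup>2 * R)"
      using mult_left_mono[OF that(1) norm_ge_zero] by (simp add: power2_eq_square mult.assoc)
    also have "\<dots> \<le> 1 * ((1 / cos \<alpha>)\<^sup>2 * R)"
      using assms(7) that(2) by (intro mult_right_mono) simp_all
    also have "\<dots> \<le> (1 / cos \<alpha>) * ((1 / cos \<alpha>)\<^sup>2 * R)"
      using sec that(2) by (intro mult_right_mono) simp_all
    finally show ?thesis by (simp add: power2_eq_square power3_eq_cube)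
  qed
  have "0 < wq q A" "0 < wq q B"
    using wq_pos[OF assms(1,6,7)] assms(4,5) by auto
  then show ?thesis
    using wq_geo_mean_le[OF assms(1,6,7,4,5,2,3,8,9)] wq_matrix_inv_comb_le[OF assms(1,6,7,4,5,2,3,8,9)]
      assms(8,9) by (auto intro!: weaken simp: mult.assoc)
qed

end
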